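(* Let $p\in[0,1]$, $m\ge1$, $n\ge 2$, let $x_1\le\dots\le x_m$ be integers and $y_1\le\dots\le y_n$ be elements of $\mathbb Z':=\mathbb Z+\tfrac12$. Let $\mathbf X=(X_1,\dots,X_m)$ be an $m$-dimensional $p$-simple coalescing random walk on $\mathbb Z$ started at $(x_1,\dots,x_m)$ and $\mathbf Y=(Y_1,\dots,Y_n)$ an $n$-dimensional $(1-p)$-simple coalescing random walk on $\mathbb Z'$ started at $(y_1,\dots,y_n)$. For $1\le i\le m$, $1\le j\le n-1$ put $I^{\rightarrow}_{ij}(t):=1\{X_i(t)\in(y_j,y_{j+1}]\}$ and $I^{\leftarrow}_{ij}(t):=1\{x_i\in(Y_j(t),Y_{j+1}(t)]\}$. Then for every $t\ge0$ the random arrays $(I^{\rightarrow}_{ij}(t))_{i,j}$ and $(I^{\leftarrow}_{ij}(t))_{i,j}$ have the same joint distribution.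
   Context: A $p$-simple random walk on $\mathbb Z$ (resp. on $\mathbb Z'=\mathbb Z+\frac12$) is a continuous-time random walk that jumps at rate $1$, each jump going to the right neighbour with probability $p$ and to the left neighbour with probability $1-p$. An $m$-dimensional $p$-simple coalescing random walk started at ordered points $x_1\le\dots\le x_m$ is the system of $m$ indexed particles in which free particles perform independent $p$-simple random walks; whenever two particles occupy the same site, the particle of higher index becomes attached to the particle of lower index and thereafter moves together with it (particles starting at the same site are attached from time $0$). Notation: $1\{B\}$ is the indicator of $B$. *)

theory Defs
  imports "HOL-Probability.Probability"
begin

text \<open>States of an m-particle system: positions indexed by 1..m (values outside are irrelevant
  and never change). Positions are real so that both Z and Z' = Z + 1/2 can be used.\<close>

text \<open>Particle i is free (the leader of its cluster) iff no particle of lower index sits at its site.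
  In a nearest-neighbour coalescing walk two particles are attached iff they occupy the same site.\<close>
definition cw_leader :: "(nat \<Rightarrow> real) \<Rightarrow> nat \<Rightarrow> bool" where
  "cw_leader x i \<longleftrightarrow> (\<forall>k\<in>{1..<i}. x k \<noteq> x i)"

text \<open>One step of the uniformized chain (uniformization rate m): a uniformly chosen particle i
  rings; if it is free, it jumps right with prob. p and left with prob. 1-p, carrying along all
  particles attached to it (those at the same site); otherwise nothing happens.\<close>
definition cw_step :: "real \<Rightarrow> nat \<Rightarrow> (nat \<Rightarrow> real) \<Rightarrow> (nat \<Rightarrow> real) pmf" where
  "cw_step p m x =
     do { i \<leftarrow> pmf_of_set {1..m};
          b \<leftarrow> bernoulli_pmf p;
          return_pmf (if cw_leader x i
                      then (\<lambda>k. if k \<in> {1..m} \<and> x k = x i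
                                 then x i + (if b then 1 else -1) else x k)
                      else x) }"

text \<open>Law at time t of the m-dimensional p-simple coalescing random walk started at x,
  via uniformization: the number of clock rings up to time t is Poisson(m t).\<close>
definition coal_rw_law :: "real \<Rightarrow> nat \<Rightarrow> (nat \<Rightarrow> real) \<Rightarrow> real \<Rightarrow> (nat \<Rightarrow> real) pmf" where
  "coal_rw_law p m x t =
     (if t = 0 then return_pmf x
      else bind_pmf (poisson_pmf (real m * t))
             (\<lambda>N. ((\<lambda>\<mu>. bind_pmf \<mu> (cw_step p m)) ^^ N) (return_pmf x)))"

definition I_right :: "nat \<Rightarrow> nat \<Rightarrow> (nat \<Rightarrow> real) \<Rightarrow> (nat \<Rightarrow> real) \<Rightarrow> nat \<Rightarrow> nat \<Rightarrow> bool" where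
  "I_right m n y X i j \<longleftrightarrow> i \<in> {1..m} \<and> j \<in> {1..n-1} \<and> y j < X i \<and> X i \<le> y (Suc j)"

definition I_left :: "nat \<Rightarrow> nat \<Rightarrow> (nat \<Rightarrow> real) \<Rightarrow> (nat \<Rightarrow> real) \<Rightarrow> nat \<Rightarrow> nat \<Rightarrow> bool" where
  "I_left m n x Y i j \<longleftrightarrow> i \<in> {1..m} \<and> j \<in> {1..n-1} \<and> Y j < x i \<and> x i \<le> Y (Suc j)"

end

theory Submission
  imports Defs
begin

text \<open>Both walks are uniformized at the common rate \<open>m + n\<close>: by Poisson thinning, the law at
  time \<open>t\<close> is a Poisson\<open>((m + n) t)\<close> mixture of powers of a lazy kernel that performs a step
  of the walk with probability \<open>m / (m + n)\<close> (resp. \<open>n / (m + n)\<close>) and stays put otherwise.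
  For configurations \<open>x\<close> on \<open>\<int>\<close> and \<open>y\<close> on \<open>\<int> + 1/2\<close>, moving the X-cluster at site \<open>c\<close>
  by \<open>s = \<plusminus>1\<close> changes the indicator array exactly as moving the Y-cluster at \<open>c + s/2\<close> by
  \<open>-s\<close> does, and a move without such a partner cluster leaves the array unchanged. Hence the
  generators of the two walks agree on the array, so the two lazy one-step laws of the array
  coincide; the classical duality argument then extends this to all powers of the kernels.\<close>

section \<open>Poisson thinning\<close>

lemma bind_poisson_binomial:
  fixes r a :: real
  assumes r: "0 < r" and a: "0 < a" "a \<le> 1"
  shows "bind_pmf (poisson_pmf r) (\<lambda>N. binomial_pmf N a) = poisson_pmf (a * r)"
proof (rule pmf_eqI)
  fix j :: nat
  define f where "f N = pmf (poisson_pmf r) N * pmf (binomial_pmf N a) j" for N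
  define S where "S = (a * r) ^ j / fact j * exp (- (a * r))"
  have f_below: "f N = 0" if "N < j" for N
    using that a r by (simp add: f_def)
  have f_above: "f (k + j) = ((a * r) ^ j / fact j * exp (- r)) * (((1 - a) * r) ^ k /\<^sub>R fact k)" for k
  proof -
    have "fact (k + j) = fact j * fact k * real ((k + j) choose j)"
      by (simp add: binomial_fact)
    then show ?thesis
      using a r unfolding f_def
      by (simp only: pmf_poisson pmf_binomial power_add power_mult_distrib) (simp add: field_simps)
  qed
  have "(\<lambda>k. f (k + j)) sums (((a * r) ^ j / fact j * exp (- r)) * exp ((1 - a) * r))"
    unfolding f_above by (intro sums_mult exp_converges)
  also have "((a * r) ^ j / fact j * exp (- r)) * exp ((1 - a) * r) = S"
    by (simp add: S_def algebra_simps flip: exp_add)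
  finally have "(\<lambda>k. f (k + j)) sums S" .
  then have "f sums (S + (\<Sum>N<j. f N))"
    by (simp add: sums_iff_shift)
  then have "f sums S"
    by (simp add: f_below)
  moreover have "0 \<le> S" "\<And>N. 0 \<le> f N"
    using a r by (simp_all add: S_def f_def)
  ultimately have "(\<Sum>N. ennreal (f N)) = ennreal S"
    by (intro sums_unique[symmetric] sums_ennreal[THEN iffD2]) auto
  moreover have "ennreal (pmf (bind_pmf (poisson_pmf r) (\<lambda>N. binomial_pmf N a)) j) = (\<Sum>N. ennreal (f N))"
    by (simp add: ennreal_pmf_bind nn_integral_measure_pmf f_def ennreal_mult' nn_integral_count_space_nat)
  ultimately show "pmf (bind_pmf (poisson_pmf r) (\<lambda>N. binomial_pmf N a)) j = pmf (poisson_pmf (a * r)) j"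
    using a r by (simp add: S_def)
qed

section \<open>Powers of a Markov kernel\<close>

primrec kernel_pow :: "('a \<Rightarrow> 'a pmf) \<Rightarrow> nat \<Rightarrow> 'a \<Rightarrow> 'a pmf" where
  "kernel_pow K 0 x = return_pmf x"
| "kernel_pow K (Suc N) x = bind_pmf (K x) (kernel_pow K N)"

lemma kernel_pow_0_fun: "kernel_pow K 0 = return_pmf"
  by (rule ext) simp

lemma kernel_pow_Suc_right: "kernel_pow K (Suc N) x = bind_pmf (kernel_pow K N x) K"
proof (induction N arbitrary: x)
  case 0
  then show ?case by (simp add: kernel_pow_0_fun bind_return_pmf bind_return_pmf')
next
  case (Suc N)
  have IH: "kernel_pow K (Suc N) = (\<lambda>y. bind_pmf (kernel_pow K N y) K)"
    using Suc.IH by (rule ext)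
  have "kernel_pow K (Suc (Suc N)) x = bind_pmf (K x) (\<lambda>y. bind_pmf (kernel_pow K N y) K)"
    by (simp only: kernel_pow.simps(2)[of K "Suc N"] IH)
  also have "\<dots> = bind_pmf (kernel_pow K (Suc N) x) K"
    by (simp add: bind_assoc_pmf)
  finally show ?case .
qed

lemma funpow_bind_pmf_return: "((\<lambda>\<mu>. bind_pmf \<mu> K) ^^ N) (return_pmf x) = kernel_pow K N x"
  by (induction N) (simp_all add: kernel_pow_Suc_right del: kernel_pow.simps(2))

lemma set_pmf_kernel_pow_subset:
  assumes "\<And>x. x \<in> S \<Longrightarrow> set_pmf (K x) \<subseteq> S" and "x \<in> S"
  shows "set_pmf (kernel_pow K N x) \<subseteq> S"
  using assms(2) by (induction N arbitrary: x) (auto simp: set_bind_pmf dest!: assms(1))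

lemma kernel_pow_duality:
  assumes KX: "\<And>x. x \<in> S \<Longrightarrow> set_pmf (KX x) \<subseteq> S"
    and KY: "\<And>y. y \<in> T \<Longrightarrow> set_pmf (KY y) \<subseteq> T"
    and dual: "\<And>x y. x \<in> S \<Longrightarrow> y \<in> T \<Longrightarrow> map_pmf (\<lambda>x'. H x' y) (KX x) = map_pmf (\<lambda>y'. H x y') (KY y)"
    and "x \<in> S" "y \<in> T"
  shows "map_pmf (\<lambda>x'. H x' y) (kernel_pow KX N x) = map_pmf (\<lambda>y'. H x y') (kernel_pow KY N y)"
  using \<open>x \<in> S\<close> \<open>y \<in> T\<close>
proof (induction N arbitrary: x y)
  case 0
  then show ?case by simp
next
  case (Suc N)
  \<comment> \<open>Peel off the first step of X and the last step of Y; being independent, they commute.\<close>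
  let ?Y = "kernel_pow KY N y"
  have "map_pmf (\<lambda>x'. H x' y) (kernel_pow KX (Suc N) x)
      = bind_pmf (KX x) (\<lambda>x'. map_pmf (\<lambda>x''. H x'' y) (kernel_pow KX N x'))"
    by (simp add: map_bind_pmf)
  also have "\<dots> = bind_pmf (KX x) (\<lambda>x'. map_pmf (\<lambda>y'. H x' y') ?Y)"
    using Suc KX by (intro bind_pmf_cong refl) auto
  also have "\<dots> = bind_pmf ?Y (\<lambda>y'. map_pmf (\<lambda>x'. H x' y') (KX x))"
    by (simp add: map_pmf_def bind_commute_pmf[of "KX x"])
  also have "\<dots> = bind_pmf ?Y (\<lambda>y'. map_pmf (\<lambda>y''. H x y'') (KY y'))"
    using Suc.prems set_pmf_kernel_pow_subset[of T KY, OF KY] by (intro bind_pmf_cong refl dual) auto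
  also have "\<dots> = map_pmf (\<lambda>y'. H x y') (kernel_pow KY (Suc N) y)"
    by (simp add: kernel_pow_Suc_right map_bind_pmf del: kernel_pow.simps(2))
  finally show ?case .
qed

definition lazy_kernel :: "real \<Rightarrow> ('a \<Rightarrow> 'a pmf) \<Rightarrow> 'a \<Rightarrow> 'a pmf" where
  "lazy_kernel a K x = bind_pmf (bernoulli_pmf a) (\<lambda>b. if b then K x else return_pmf x)"

lemma set_pmf_lazy_kernel_subset:
  assumes "\<And>x. x \<in> S \<Longrightarrow> set_pmf (K x) \<subseteq> S" and "x \<in> S"
  shows "set_pmf (lazy_kernel a K x) \<subseteq> S"
  using assms(1)[OF assms(2)] assms(2) by (auto simp: lazy_kernel_def split: if_splits)

lemma pmf_map_lazy_kernel:
  assumes "0 \<le> a" "a \<le> 1"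
  shows "pmf (map_pmf G (lazy_kernel a K x)) A = a * pmf (map_pmf G (K x)) A + (1 - a) * of_bool (G x = A)"
  using assms by (simp add: lazy_kernel_def map_bind_pmf pmf_bind indicator_def)

lemma kernel_pow_lazy_kernel:
  assumes a: "0 \<le> a" "a \<le> 1"
  shows "kernel_pow (lazy_kernel a K) N x = bind_pmf (binomial_pmf N a) (\<lambda>j. kernel_pow K j x)"
proof (induction N)
  case 0
  then show ?case using a by (simp add: binomial_pmf_0 bind_return_pmf)
next
  case (Suc N)
  have lazy_last: "bind_pmf \<mu> (lazy_kernel a K) = bind_pmf (bernoulli_pmf a) (\<lambda>b. if b then bind_pmf \<mu> K else \<mu>)"
    for \<mu> :: "'a pmf"
    unfolding lazy_kernel_def
    by (subst bind_commute_pmf) (auto simp: bind_return_pmf' intro!: bind_pmf_cong)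
  have "kernel_pow (lazy_kernel a K) (Suc N) x
      = bind_pmf (binomial_pmf N a) (\<lambda>j. bind_pmf (kernel_pow K j x) (lazy_kernel a K))"
    by (simp add: kernel_pow_Suc_right Suc bind_assoc_pmf del: kernel_pow.simps(2))
  also have "\<dots> = bind_pmf (binomial_pmf N a)
      (\<lambda>j. bind_pmf (bernoulli_pmf a) (\<lambda>b. kernel_pow K ((if b then 1 else 0) + j) x))"
    by (auto simp: lazy_last kernel_pow_Suc_right intro!: bind_pmf_cong simp del: kernel_pow.simps(2))
  also have "\<dots> = bind_pmf (binomial_pmf (Suc N) a) (\<lambda>j. kernel_pow K j x)"
    using a by (simp add: binomial_pmf_Suc bind_assoc_pmf bind_return_pmf bind_commute_pmf[of "binomial_pmf N a"])
  finally show ?case .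
qed

lemma bind_poisson_kernel_pow_lazy_kernel:
  assumes "0 < r" "0 < a" "a \<le> 1"
  shows "bind_pmf (poisson_pmf r) (\<lambda>N. kernel_pow (lazy_kernel a K) N x)
       = bind_pmf (poisson_pmf (a * r)) (\<lambda>N. kernel_pow K N x)"
  using assms by (simp add: kernel_pow_lazy_kernel bind_poisson_binomial flip: bind_assoc_pmf)

lemma Ints_gap_cases:
  fixes u w :: real
  assumes "u \<in> \<int>" "w \<in> \<int>"
  shows "w = u \<or> w \<le> u - 1 \<or> w \<ge> u + 1"
proof -
  obtain k where k: "w - u = of_int k"
    using assms by (metis Ints_cases Ints_diff)
  have "k = 0 \<or> k \<le> -1 \<or> k \<ge> 1" by linarith
  then have "of_int k = (0::real) \<or> of_int k \<le> (-1::real) \<or> of_int k \<ge> (1::real)"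
    by auto
  then show ?thesis
    using k by linarith
qed

lemma Ints_half_gap_cases:
  fixes u v :: real
  assumes "u \<in> \<int>" "v - 1/2 \<in> \<int>"
  shows "v = u - 1/2 \<or> v = u + 1/2 \<or> v \<le> u - 3/2 \<or> v \<ge> u + 3/2"
proof -
  obtain k where k: "v - 1/2 - u = of_int k"
    using assms by (metis Ints_cases Ints_diff)
  have "k = -1 \<or> k = 0 \<or> k \<le> -2 \<or> k \<ge> 1" by linarith
  then have "of_int k = (-1::real) \<or> of_int k = (0::real) \<or> of_int k \<le> (-2::real) \<or> of_int k \<ge> (1::real)"
    by auto
  then show ?thesis
    using k by linarith
qed

lemma less_shift_int_iff_shift_half_less:
  fixes c u v s :: real
  assumes c: "c \<in> \<int>" and u: "u \<in> \<int>" and v: "v - 1/2 \<in> \<int>" and s: "s = 1 \<or> s = -1"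
  shows "v < (if u = c then c + s else u) \<longleftrightarrow> (if v = c + s/2 then c - s/2 else v) < u"
proof (cases "u = c")
  case True
  then show ?thesis using Ints_half_gap_cases[OF c v] s by auto
next
  case False
  then show ?thesis using Ints_gap_cases[OF c u] s by auto
qed

lemma less_shift_int_iff_less:
  fixes c u v s :: real
  assumes c: "c \<in> \<int>" and v: "v - 1/2 \<in> \<int>" and s: "s = 1 \<or> s = -1" and v_ne: "v \<noteq> c + s/2"
  shows "v < (if u = c then c + s else u) \<longleftrightarrow> v < u"
  using Ints_half_gap_cases[OF c v] s v_ne by auto

lemma shift_half_less_iff_less:
  fixes d u v s :: real
  assumes d: "d - 1/2 \<in> \<int>" and u: "u \<in> \<int>" and s: "s = 1 \<or> s = -1" and u_ne: "u \<noteq> d + s/2"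
  shows "(if v = d then d + s else v) < u \<longleftrightarrow> v < u"
  using Ints_half_gap_cases[OF u d] s u_ne by auto

lemma sum_eq_sum_translate:
  fixes f g :: "'a::ab_group_add \<Rightarrow> 'b::comm_monoid_add"
  assumes "finite S" "finite T"
    and "\<And>c. c \<in> S \<Longrightarrow> c + h \<notin> T \<Longrightarrow> f c = 0"
    and "\<And>d. d \<in> T \<Longrightarrow> d - h \<notin> S \<Longrightarrow> g d = 0"
    and "\<And>c. c \<in> S \<Longrightarrow> c + h \<in> T \<Longrightarrow> f c = g (c + h)"
  shows "sum f S = sum g T"
proof -
  let ?M = "{c \<in> S. c + h \<in> T}"
  have "sum f S = sum f ?M"
    using assms by (intro sum.mono_neutral_right) auto
  also have "\<dots> = sum (\<lambda>c. g (c + h)) ?M"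
    using assms by (intro sum.cong) auto
  also have "\<dots> = sum g ((\<lambda>c. c + h) ` ?M)"
    by (simp add: sum.reindex)
  also have "(\<lambda>c. c + h) ` ?M = {d \<in> T. d - h \<in> S}"
    by (force simp: image_iff algebra_simps)
  also have "sum g \<dots> = sum g T"
    using assms by (intro sum.mono_neutral_left) auto
  finally show ?thesis .
qed

section \<open>The uniformized coalescing walk\<close>

definition shift_cluster :: "nat \<Rightarrow> (nat \<Rightarrow> real) \<Rightarrow> real \<Rightarrow> real \<Rightarrow> nat \<Rightarrow> real" where
  "shift_cluster m x c s = (\<lambda>k. if k \<in> {1..m} \<and> x k = c then c + s else x k)"

lemma cw_step_shift_cluster:
  "cw_step p m x =
     do { i \<leftarrow> pmf_of_set {1..m};
          b \<leftarrow> bernoulli_pmf p;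
          return_pmf (if cw_leader x i then shift_cluster m x (x i) (if b then 1 else -1) else x) }"
  unfolding cw_step_def shift_cluster_def ..

lemma coal_rw_law_lazy:
  assumes "0 < t" "1 \<le> m" "real m \<le> R"
  shows "coal_rw_law p m x t
       = bind_pmf (poisson_pmf (R * t)) (\<lambda>N. kernel_pow (lazy_kernel (real m / R) (cw_step p m)) N x)"
  using assms by (simp add: coal_rw_law_def funpow_bind_pmf_return bind_poisson_kernel_pow_lazy_kernel)

lemma bij_betw_cw_leaders: "bij_betw x {i \<in> {1..m}. cw_leader x i} (x ` {1..m})"
proof -
  let ?L = "{i \<in> {1..m}. cw_leader x i}"
  have distinct: "x i \<noteq> x k" if "k \<in> ?L" "1 \<le> i" "i < k" for i k
    using that by (auto simp: cw_leader_def)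
  have "inj_on x ?L"
  proof (rule inj_onI)
    fix i k assume "i \<in> ?L" "k \<in> ?L" "x i = x k"
    then show "i = k"
      using distinct[of k i] distinct[of i k] by (cases i k rule: linorder_cases) auto
  qed
  moreover have "x ` {1..m} \<subseteq> x ` ?L"
  proof
    fix c assume "c \<in> x ` {1..m}"
    then obtain i where "i \<in> {1..m}" "x i = c" by blast
    define k where "k = (LEAST k. k \<in> {1..m} \<and> x k = c)"
    have k: "k \<in> {1..m}" "x k = c"
      using LeastI[of "\<lambda>k. k \<in> {1..m} \<and> x k = c" i] \<open>i \<in> {1..m}\<close> \<open>x i = c\<close> by (auto simp: k_def)
    have "k \<le> l" if "l \<in> {1..m}" "x l = c" for l
      unfolding k_def using that by (intro Least_le) simp
    then have "cw_leader x k"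
      using k by (force simp: cw_leader_def)
    then show "c \<in> x ` ?L"
      using k by blast
  qed
  ultimately show ?thesis
    by (auto simp: bij_betw_def)
qed

lemma sum_cw_leaders: "(\<Sum>i\<in>{1..m}. if cw_leader x i then h (x i) else 0) = (\<Sum>c\<in>x ` {1..m}. h c)"
proof -
  have "(\<Sum>i\<in>{1..m}. if cw_leader x i then h (x i) else 0) = (\<Sum>i\<in>{i \<in> {1..m}. cw_leader x i}. h (x i))"
    by (rule sum.inter_filter[symmetric]) simp
  also have "\<dots> = (\<Sum>c\<in>x ` {1..m}. h c)"
    by (rule sum.reindex_bij_betw[OF bij_betw_cw_leaders])
  finally show ?thesis .
qed

definition cw_generator :: "real \<Rightarrow> nat \<Rightarrow> ((nat \<Rightarrow> real) \<Rightarrow> real) \<Rightarrow> (nat \<Rightarrow> real) \<Rightarrow> real" where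
  "cw_generator p m f x =
     (\<Sum>c\<in>x ` {1..m}. p * (f (shift_cluster m x c 1) - f x) + (1 - p) * (f (shift_cluster m x c (-1)) - f x))"

lemma pmf_map_cw_step:
  assumes "1 \<le> m" "0 \<le> p" "p \<le> 1"
  shows "pmf (map_pmf G (cw_step p m x)) A
       = of_bool (G x = A) + cw_generator p m (\<lambda>z. of_bool (G z = A)) x / real m"
proof -
  define f where "f z = (of_bool (G z = A) :: real)" for z
  define h where "h c = p * (f (shift_cluster m x c 1) - f x) + (1 - p) * (f (shift_cluster m x c (-1)) - f x)" for c
  have step: "pmf (bind_pmf (bernoulli_pmf p) (\<lambda>b. return_pmf
      (G (if cw_leader x i then shift_cluster m x (x i) (if b then 1 else -1) else x)))) A
    = f x + (if cw_leader x i then h (x i) else 0)" for i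
    using assms by (simp add: pmf_bind f_def h_def indicator_def algebra_simps)
  have "pmf (map_pmf G (cw_step p m x)) A = (\<Sum>i\<in>{1..m}. f x + (if cw_leader x i then h (x i) else 0)) / real m"
    using assms by (simp add: cw_step_shift_cluster map_bind_pmf map_return_pmf pmf_bind_pmf_of_set step)
  also have "\<dots> = (real m * f x + (\<Sum>c\<in>x ` {1..m}. h c)) / real m"
    by (subst sum_cw_leaders[symmetric]) (simp add: sum.distrib)
  also have "\<dots> = f x + (\<Sum>c\<in>x ` {1..m}. h c) / real m"
    using assms by (simp add: add_divide_distrib)
  finally show ?thesis
    by (simp add: f_def h_def cw_generator_def)
qed

lemma pmf_map_lazy_cw_step:
  assumes "1 \<le> m" "real m \<le> R" "0 \<le> p" "p \<le> 1"
  shows "pmf (map_pmf G (lazy_kernel (real m / R) (cw_step p m) x)) A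
       = of_bool (G x = A) + cw_generator p m (\<lambda>z. of_bool (G z = A)) x / R"
  using assms by (simp add: pmf_map_lazy_kernel pmf_map_cw_step field_simps)

definition on_lattice :: "real \<Rightarrow> nat \<Rightarrow> (nat \<Rightarrow> real) \<Rightarrow> bool" where
  "on_lattice a m x \<longleftrightarrow> (\<forall>i\<in>{1..m}. x i - a \<in> \<int>)"

lemma on_lattice_shift_cluster:
  assumes "on_lattice a m x" "s \<in> \<int>"
  shows "on_lattice a m (shift_cluster m x c s)"
proof -
  have "x i + s - a \<in> \<int>" if "i \<in> {1..m}" for i
    using assms that Ints_add[of "x i - a" s] by (simp add: on_lattice_def algebra_simps)
  then show ?thesis
    using assms by (auto simp: on_lattice_def shift_cluster_def)
qed

lemma on_lattice_lazy_cw_step: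
  assumes "on_lattice a m x" and "z \<in> set_pmf (lazy_kernel r (cw_step p m) x)"
  shows "on_lattice a m z"
proof -
  have "set_pmf (lazy_kernel r (cw_step p m) x) \<subseteq> Collect (on_lattice a m)"
    using assms(1)
    by (intro set_pmf_lazy_kernel_subset) (auto simp: cw_step_shift_cluster intro!: on_lattice_shift_cluster)
  then show ?thesis
    using assms(2) by blast
qed

section \<open>Duality of the indicator arrays\<close>

lemma I_left_cong:
  assumes "\<And>i j. i \<in> {1..m} \<Longrightarrow> j \<in> {1..n} \<Longrightarrow> Y j < X i \<longleftrightarrow> Y' j < X' i"
  shows "I_left m n X Y = I_left m n X' Y'"
proof (intro ext)
  fix i j
  show "I_left m n X Y i j = I_left m n X' Y' i j"
  proof (cases "i \<in> {1..m} \<and> j \<in> {1..n-1}")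
    case True
    then have "Y j < X i \<longleftrightarrow> Y' j < X' i" "Y (Suc j) < X i \<longleftrightarrow> Y' (Suc j) < X' i"
      by (auto intro!: assms)
    then show ?thesis
      by (simp add: I_left_def not_less[symmetric])
  qed (auto simp: I_left_def)
qed

lemma I_left_shift_X_eq_shift_Y:
  assumes x: "on_lattice 0 m x" and y: "on_lattice (1/2) n y" and c: "c \<in> \<int>" and s: "s = 1 \<or> s = -1"
  shows "I_left m n (shift_cluster m x c s) y = I_left m n x (shift_cluster n y (c + s/2) (-s))"
proof (rule I_left_cong)
  fix i j assume ij: "i \<in> {1..m}" "j \<in> {1..n}"
  then have "x i \<in> \<int>" "y j - 1/2 \<in> \<int>"
    using x y by (auto simp: on_lattice_def)
  moreover have "c + s/2 + -s = c - s/2" by simp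
  ultimately show "y j < shift_cluster m x c s i \<longleftrightarrow> shift_cluster n y (c + s/2) (-s) j < x i"
    using less_shift_int_iff_shift_half_less[OF c _ _ s] ij by (simp add: shift_cluster_def)
qed

lemma I_left_shift_X_unseen:
  assumes y: "on_lattice (1/2) n y" and c: "c \<in> \<int>" and s: "s = 1 \<or> s = -1"
    and unseen: "c + s/2 \<notin> y ` {1..n}"
  shows "I_left m n (shift_cluster m x c s) y = I_left m n x y"
proof (rule I_left_cong)
  fix i j assume ij: "i \<in> {1..m}" "j \<in> {1..n}"
  have "y j - 1/2 \<in> \<int>"
    using y ij by (simp add: on_lattice_def)
  moreover have "y j \<noteq> c + s/2"
    using unseen ij(2) by (metis image_eqI)
  ultimately show "y j < shift_cluster m x c s i \<longleftrightarrow> y j < x i"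
    using less_shift_int_iff_less[OF c _ s] ij by (simp add: shift_cluster_def)
qed

lemma I_left_shift_Y_unseen:
  assumes x: "on_lattice 0 m x" and d: "d - 1/2 \<in> \<int>" and s: "s = 1 \<or> s = -1"
    and unseen: "d + s/2 \<notin> x ` {1..m}"
  shows "I_left m n x (shift_cluster n y d s) = I_left m n x y"
proof (rule I_left_cong)
  fix i j assume ij: "i \<in> {1..m}" "j \<in> {1..n}"
  have "x i \<in> \<int>"
    using x ij by (simp add: on_lattice_def)
  moreover have "x i \<noteq> d + s/2"
    using unseen ij(1) by (metis image_eqI)
  ultimately show "shift_cluster n y d s j < x i \<longleftrightarrow> y j < x i"
    using shift_half_less_iff_less[OF d _ s] ij by (simp add: shift_cluster_def)
qed

lemma sum_shift_X_eq_sum_shift_Y: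
  fixes \<phi> :: "(nat \<Rightarrow> nat \<Rightarrow> bool) \<Rightarrow> real"
  assumes x: "on_lattice 0 m x" and y: "on_lattice (1/2) n y" and s: "s = 1 \<or> s = -1"
  shows "(\<Sum>c\<in>x ` {1..m}. \<phi> (I_left m n (shift_cluster m x c s) y) - \<phi> (I_left m n x y))
       = (\<Sum>d\<in>y ` {1..n}. \<phi> (I_left m n x (shift_cluster n y d (-s))) - \<phi> (I_left m n x y))"
proof (rule sum_eq_sum_translate[where h = "s/2"])
  have c_int: "c \<in> \<int>" if "c \<in> x ` {1..m}" for c
    using x that by (auto simp: on_lattice_def)
  have d_half_int: "d - 1/2 \<in> \<int>" if "d \<in> y ` {1..n}" for d
    using y that by (auto simp: on_lattice_def)
  show "\<phi> (I_left m n (shift_cluster m x c s) y) - \<phi> (I_left m n x y) = 0"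
    if "c \<in> x ` {1..m}" "c + s/2 \<notin> y ` {1..n}" for c
    using I_left_shift_X_unseen[OF y c_int s] that by simp
  show "\<phi> (I_left m n x (shift_cluster n y d (-s))) - \<phi> (I_left m n x y) = 0"
    if "d \<in> y ` {1..n}" "d - s/2 \<notin> x ` {1..m}" for d
  proof -
    have "-s = 1 \<or> -s = -1" "d + -s/2 \<notin> x ` {1..m}"
      using s that by auto
    then show ?thesis
      using I_left_shift_Y_unseen[OF x d_half_int[OF that(1)], where n = n and y = y] by simp
  qed
  show "\<phi> (I_left m n (shift_cluster m x c s) y) - \<phi> (I_left m n x y)
      = \<phi> (I_left m n x (shift_cluster n y (c + s/2) (-s))) - \<phi> (I_left m n x y)"
    if "c \<in> x ` {1..m}" "c + s/2 \<in> y ` {1..n}" for c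
    using I_left_shift_X_eq_shift_Y[OF x y c_int s] that by simp
qed simp_all

lemma cw_generator_duality:
  fixes \<phi> :: "(nat \<Rightarrow> nat \<Rightarrow> bool) \<Rightarrow> real"
  assumes x: "on_lattice 0 m x" and y: "on_lattice (1/2) n y"
  shows "cw_generator p m (\<lambda>X. \<phi> (I_left m n X y)) x = cw_generator (1 - p) n (\<lambda>Y. \<phi> (I_left m n x Y)) y"
proof -
  let ?\<Delta>X = "\<lambda>s. \<Sum>c\<in>x ` {1..m}. \<phi> (I_left m n (shift_cluster m x c s) y) - \<phi> (I_left m n x y)"
  let ?\<Delta>Y = "\<lambda>s. \<Sum>d\<in>y ` {1..n}. \<phi> (I_left m n x (shift_cluster n y d s)) - \<phi> (I_left m n x y)"
  have "cw_generator p m (\<lambda>X. \<phi> (I_left m n X y)) x = p * ?\<Delta>X 1 + (1 - p) * ?\<Delta>X (-1)"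
    by (simp add: cw_generator_def sum.distrib sum_distrib_left)
  also have "\<dots> = p * ?\<Delta>Y (-1) + (1 - p) * ?\<Delta>Y 1"
    using sum_shift_X_eq_sum_shift_Y[OF x y, of 1 \<phi>] sum_shift_X_eq_sum_shift_Y[OF x y, of "-1" \<phi>] by simp
  also have "\<dots> = cw_generator (1 - p) n (\<lambda>Y. \<phi> (I_left m n x Y)) y"
    by (simp add: cw_generator_def sum.distrib sum_distrib_left)
  finally show ?thesis .
qed

lemma lazy_cw_step_duality:
  assumes "1 \<le> m" "1 \<le> n" "0 \<le> p" "p \<le> 1" and x: "on_lattice 0 m x" and y: "on_lattice (1/2) n y"
  shows "map_pmf (\<lambda>X. I_left m n X y) (lazy_kernel (real m / (real m + real n)) (cw_step p m) x)
       = map_pmf (\<lambda>Y. I_left m n x Y) (lazy_kernel (real n / (real m + real n)) (cw_step (1 - p) n) y)"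
proof (rule pmf_eqI)
  fix A
  show "pmf (map_pmf (\<lambda>X. I_left m n X y) (lazy_kernel (real m / (real m + real n)) (cw_step p m) x)) A
      = pmf (map_pmf (\<lambda>Y. I_left m n x Y) (lazy_kernel (real n / (real m + real n)) (cw_step (1 - p) n) y)) A"
    using assms cw_generator_duality[OF x y, of p "\<lambda>I. of_bool (I = A)"]
    by (simp add: pmf_map_lazy_cw_step)
qed

lemma I_right_eq_I_left: "I_right m n y X = I_left m n X y"
  by (simp add: I_right_def I_left_def fun_eq_iff)

theorem mainTheorem2:
  fixes p t :: real and m n :: nat and x y :: "nat \<Rightarrow> real"
  assumes "0 \<le> p" "p \<le> 1" "m \<ge> 1" "n \<ge> 2" "t \<ge> 0"
    and "\<forall>i\<in>{1..m}. x i \<in> \<int>"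
    and "\<forall>i\<in>{1..<m}. x i \<le> x (Suc i)"
    and "\<forall>j\<in>{1..n}. y j - 1/2 \<in> \<int>"
    and "\<forall>j\<in>{1..<n}. y j \<le> y (Suc j)"
  shows "map_pmf (\<lambda>X. I_right m n y X) (coal_rw_law p m x t)
       = map_pmf (\<lambda>Y. I_left m n x Y) (coal_rw_law (1 - p) n y t)"
proof (cases "t = 0")
  case True
  then show ?thesis
    by (simp add: coal_rw_law_def I_right_eq_I_left)
next
  case False
  define R where "R = real m + real n"
  define KX where "KX = lazy_kernel (real m / R) (cw_step p m)"
  define KY where "KY = lazy_kernel (real n / R) (cw_step (1 - p) n)"
  have t: "0 < t" and n: "1 \<le> n"
    using False assms by auto
  have x: "on_lattice 0 m x" and y: "on_lattice (1/2) n y"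
    using assms by (simp_all add: on_lattice_def)
  have "map_pmf (\<lambda>X. I_left m n X y) (kernel_pow KX N x) = map_pmf (\<lambda>Y. I_left m n x Y) (kernel_pow KY N y)" for N
    using assms n x y
    by (intro kernel_pow_duality[where S = "Collect (on_lattice 0 m)" and T = "Collect (on_lattice (1/2) n)"])
      (auto simp: KX_def KY_def R_def intro: on_lattice_lazy_cw_step lazy_cw_step_duality)
  moreover have "coal_rw_law p m x t = bind_pmf (poisson_pmf (R * t)) (\<lambda>N. kernel_pow KX N x)"
    "coal_rw_law (1 - p) n y t = bind_pmf (poisson_pmf (R * t)) (\<lambda>N. kernel_pow KY N y)"
    using t assms n by (simp_all add: coal_rw_law_lazy KX_def KY_def R_def)
  ultimately show ?thesis
    by (simp add: I_right_eq_I_left map_bind_pmf)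
qed

end
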